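(* Let $(\mathcal J_1,\mathcal J_2,\mathcal J_3)$ be a generalized almost hypercomplex structure and $D$ a generalized connection on a Courant algebroid $E$ with $D\mathcal J_1=0$. Define $D^{(1)}_u:=D_u-\frac12\mathcal J_2(D_u\mathcal J_2)$ and $\tilde D:=D^{(1)}-\frac16\tilde\pi(T^{D^{(1)}})$, where $\tilde\pi:\Lambda^3E^*\to E^*\otimes\Lambda^2E^*$ is $(\tilde\pi\alpha)(u,v,w)=\alpha(u,v,w)+\sum_{i=1}^3\alpha(u,\mathcal J_iv,\mathcal J_iw)$ and, for $\eta\in E^*\otimes\Lambda^2E^*$, $D^{(1)}+\eta$ means $\langle(D^{(1)}+\eta)_uv,w\rangle=\langle D^{(1)}_uv,w\rangle+\eta(u,v,w)$. Then $D^{(1)}$ and $\tilde D$ are generalized connections preserving each $\mathcal J_i$, $i=1,2,3$, and $$T^{\tilde D}(u,v,w)=\tfrac16\sum_{i=1}^3N_{\mathcal J_i}(u,v,w).$$ In particular, if $(\mathcal J_1,\mathcal J_2,\mathcal J_3)$ is a generalized hypercomplex structure, then $\tilde D$ is torsion-free (and hypercomplex).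
   Context: A Courant algebroid on $M$ is a real vector bundle $E\to M$ with nondegenerate symmetric bilinear form $\langle\cdot,\cdot\rangle$, an $\mathbb R$-bilinear bracket $[\cdot,\cdot]$ on $\Gamma(E)$ and bundle map $\pi:E\to TM$ such that for $u,v,w\in\Gamma(E)$, $f\in C^\infty(M)$: $[u,[v,w]]=[[u,v],w]+[v,[u,w]]$; $\pi([u,v])=[\pi(u),\pi(v)]$; $[u,fv]=\pi(u)(f)v+f[u,v]$; $\pi(u)\langle v,w\rangle=\langle[u,v],w\rangle+\langle v,[u,w]\rangle$; $2\langle[u,u],v\rangle=\pi(v)\langle u,u\rangle$. A generalized connection is an $\mathbb R$-linear $D:\Gamma(E)\to\Gamma(E^*\otimes E)$ with $D_u(fv)=\pi(u)(f)v+fD_uv$ and $\pi(u)\langle v,w\rangle=\langle D_uv,w\rangle+\langle v,D_uw\rangle$; its torsion $T^D(u,v)=D_uv-D_vu-[u,v]+(Du)^*v$ ($(Du)^*$ adjoint of $w\mapsto D_wu$) is viewed as the 3-form $T^D(u,v,w)=\langle T^D(u,v),w\rangle$. A generalized almost complex structure is a $\langle\cdot,\cdot\rangle$-orthogonal $\mathcal J$ with $\mathcal J^2=-\mathrm{Id}$; $N_{\mathcal J}(u,v)=[\mathcal Ju,\mathcal Jv]-[u,v]-\mathcal J([\mathcal Ju,v]+[u,\mathcal Jv])$, viewed as the 3-form $\langle N_{\mathcal J}(u,v),w\rangle$. A generalized almost hypercomplex structure is a triple of pairwise anticommuting generalized almost complex structures with $\mathcal J_3=\mathcal J_1\mathcal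 J_2$; it is a generalized hypercomplex structure if every $N_{\mathcal J_i}=0$. *)

theory Defs
  imports Complex_Main
begin

text \<open>Sections of E form the type 's,
 smooth functions form the commutative real algebra 'f (containing the real
 constants via of_real); sm is the C-infinity-module action on sections,
 anc the anchor (anc u is the vector field pi(u) acting on functions),
 ip the fibrewise pairing and br the bracket.\<close>

definition module_action :: "('f::{comm_ring_1,real_algebra_1} \<Rightarrow> 's::real_vector \<Rightarrow> 's) \<Rightarrow> bool" where
  "module_action sm \<longleftrightarrow>
     (\<forall>f g u. sm (f * g) u = sm f (sm g u)) \<and> (\<forall>u. sm 1 u = u) \<and>
     (\<forall>f u v. sm f (u + v) = sm f u + sm f v) \<and>
     (\<forall>f g u. sm (f + g) u = sm f u + sm g u) \<and>
     (\<forall>c u. sm (of_real c) u = c *\<^sub>R u)"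

definition bundle_endo :: "('f::{comm_ring_1,real_algebra_1} \<Rightarrow> 's::real_vector \<Rightarrow> 's) \<Rightarrow> ('s \<Rightarrow> 's) \<Rightarrow> bool" where
  "bundle_endo sm \<phi> \<longleftrightarrow> (\<forall>u v. \<phi> (u + v) = \<phi> u + \<phi> v) \<and> (\<forall>f u. \<phi> (sm f u) = sm f (\<phi> u))"

definition bundle_functional :: "('f::{comm_ring_1,real_algebra_1} \<Rightarrow> 's::real_vector \<Rightarrow> 's) \<Rightarrow> ('s \<Rightarrow> 'f) \<Rightarrow> bool" where
  "bundle_functional sm \<alpha> \<longleftrightarrow> (\<forall>u v. \<alpha> (u + v) = \<alpha> u + \<alpha> v) \<and> (\<forall>f u. \<alpha> (sm f u) = f * \<alpha> u)"

definition is_anchor :: "('f::{comm_ring_1,real_algebra_1} \<Rightarrow> 's::real_vector \<Rightarrow> 's) \<Rightarrow> ('s \<Rightarrow> 'f \<Rightarrow> 'f) \<Rightarrow> bool" where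
  "is_anchor sm anc \<longleftrightarrow>
     (\<forall>u f g. anc u (f + g) = anc u f + anc u g) \<and>
     (\<forall>u f g. anc u (f * g) = anc u f * g + f * anc u g) \<and>
     (\<forall>u c f. anc u (c *\<^sub>R f) = c *\<^sub>R anc u f) \<and>
     (\<forall>u v f. anc (u + v) f = anc u f + anc v f) \<and>
     (\<forall>g u f. anc (sm g u) f = g * anc u f)"

text \<open>Nondegenerate symmetric C-infinity-bilinear form; as for a finite-rank
 bundle with a nondegenerate fibre metric, every section of E^* is of the form
 ip x (musical isomorphism).\<close>
definition is_metric :: "('f::{comm_ring_1,real_algebra_1} \<Rightarrow> 's::real_vector \<Rightarrow> 's) \<Rightarrow> ('s \<Rightarrow> 's \<Rightarrow> 'f) \<Rightarrow> bool" where
  "is_metric sm ip \<longleftrightarrow>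
     (\<forall>u v. ip u v = ip v u) \<and>
     (\<forall>u v w. ip (u + v) w = ip u w + ip v w) \<and>
     (\<forall>f u w. ip (sm f u) w = f * ip u w) \<and>
     (\<forall>v. (\<forall>w. ip v w = 0) \<longrightarrow> v = 0) \<and>
     (\<forall>\<alpha>. bundle_functional sm \<alpha> \<longrightarrow> (\<exists>x. \<forall>w. ip x w = \<alpha> w))"

definition courant_algebroid ::
  "('f::{comm_ring_1,real_algebra_1} \<Rightarrow> 's::real_vector \<Rightarrow> 's) \<Rightarrow> ('s \<Rightarrow> 'f \<Rightarrow> 'f) \<Rightarrow>
   ('s \<Rightarrow> 's \<Rightarrow> 'f) \<Rightarrow> ('s \<Rightarrow> 's \<Rightarrow> 's) \<Rightarrow> bool" where
  "courant_algebroid sm anc ip br \<longleftrightarrow>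
     module_action sm \<and> is_anchor sm anc \<and> is_metric sm ip \<and>
     (\<forall>u. linear (br u)) \<and> (\<forall>v. linear (\<lambda>u. br u v)) \<and>
     (\<forall>u v w. br u (br v w) = br (br u v) w + br v (br u w)) \<and>
     (\<forall>u v f. anc (br u v) f = anc u (anc v f) - anc v (anc u f)) \<and>
     (\<forall>u v f. br u (sm f v) = sm (anc u f) v + sm f (br u v)) \<and>
     (\<forall>u v w. anc u (ip v w) = ip (br u v) w + ip v (br u w)) \<and>
     (\<forall>u v. 2 * ip (br u u) v = anc v (ip u u))"

definition gen_connection ::
  "('f::{comm_ring_1,real_algebra_1} \<Rightarrow> 's::real_vector \<Rightarrow> 's) \<Rightarrow> ('s \<Rightarrow> 'f \<Rightarrow> 'f) \<Rightarrow>
   ('s \<Rightarrow> 's \<Rightarrow> 'f) \<Rightarrow> ('s \<Rightarrow> 's \<Rightarrow> 's) \<Rightarrow> bool" where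
  "gen_connection sm anc ip D \<longleftrightarrow>
     (\<forall>u. linear (D u)) \<and>
     (\<forall>u u' v. D (u + u') v = D u v + D u' v) \<and>
     (\<forall>f u v. D (sm f u) v = sm f (D u v)) \<and>
     (\<forall>u f v. D u (sm f v) = sm (anc u f) v + sm f (D u v)) \<and>
     (\<forall>u v w. anc u (ip v w) = ip (D u v) w + ip v (D u w))"

definition cov_deriv_endo :: "('s \<Rightarrow> 's \<Rightarrow> 's::real_vector) \<Rightarrow> ('s \<Rightarrow> 's) \<Rightarrow> 's \<Rightarrow> 's \<Rightarrow> 's" where
  "cov_deriv_endo D J u v = D u (J v) - J (D u v)"

definition preserves :: "('s \<Rightarrow> 's \<Rightarrow> 's::real_vector) \<Rightarrow> ('s \<Rightarrow> 's) \<Rightarrow> bool" where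
  "preserves D J \<longleftrightarrow> (\<forall>u v. cov_deriv_endo D J u v = 0)"

definition gen_almost_complex ::
  "('f::{comm_ring_1,real_algebra_1} \<Rightarrow> 's::real_vector \<Rightarrow> 's) \<Rightarrow> ('s \<Rightarrow> 's \<Rightarrow> 'f) \<Rightarrow> ('s \<Rightarrow> 's) \<Rightarrow> bool" where
  "gen_almost_complex sm ip J \<longleftrightarrow>
     bundle_endo sm J \<and> (\<forall>u. J (J u) = - u) \<and> (\<forall>u v. ip (J u) (J v) = ip u v)"

definition gen_almost_hypercomplex ::
  "('f::{comm_ring_1,real_algebra_1} \<Rightarrow> 's::real_vector \<Rightarrow> 's) \<Rightarrow> ('s \<Rightarrow> 's \<Rightarrow> 'f) \<Rightarrow>
   ('s \<Rightarrow> 's) \<Rightarrow> ('s \<Rightarrow> 's) \<Rightarrow> ('s \<Rightarrow> 's) \<Rightarrow> bool" where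
  "gen_almost_hypercomplex sm ip J1 J2 J3 \<longleftrightarrow>
     gen_almost_complex sm ip J1 \<and> gen_almost_complex sm ip J2 \<and> gen_almost_complex sm ip J3 \<and>
     (\<forall>u. J1 (J2 u) = - J2 (J1 u)) \<and> (\<forall>u. J1 (J3 u) = - J3 (J1 u)) \<and>
     (\<forall>u. J2 (J3 u) = - J3 (J2 u)) \<and> (\<forall>u. J3 u = J1 (J2 u))"

definition nijenhuis_form ::
  "('s \<Rightarrow> 's \<Rightarrow> 's::real_vector) \<Rightarrow> ('s \<Rightarrow> 's \<Rightarrow> 'f) \<Rightarrow> ('s \<Rightarrow> 's) \<Rightarrow> 's \<Rightarrow> 's \<Rightarrow> 's \<Rightarrow> 'f" where
  "nijenhuis_form br ip J u v w =
     ip (br (J u) (J v) - br u v - J (br (J u) v + br u (J v))) w"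

definition gen_hypercomplex ::
  "('f::{comm_ring_1,real_algebra_1} \<Rightarrow> 's::real_vector \<Rightarrow> 's) \<Rightarrow> ('s \<Rightarrow> 's \<Rightarrow> 'f) \<Rightarrow> ('s \<Rightarrow> 's \<Rightarrow> 's) \<Rightarrow>
   ('s \<Rightarrow> 's) \<Rightarrow> ('s \<Rightarrow> 's) \<Rightarrow> ('s \<Rightarrow> 's) \<Rightarrow> bool" where
  "gen_hypercomplex sm ip br J1 J2 J3 \<longleftrightarrow>
     gen_almost_hypercomplex sm ip J1 J2 J3 \<and>
     (\<forall>u v w. nijenhuis_form br ip J1 u v w = 0) \<and>
     (\<forall>u v w. nijenhuis_form br ip J2 u v w = 0) \<and>
     (\<forall>u v w. nijenhuis_form br ip J3 u v w = 0)"

text \<open>Torsion as a 3-form: T(u,v,w) = <D_u v - D_v u - [u,v], w> + <(Du)^* v, w>,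
 where <(Du)^* v, w> = <v, D_w u>.\<close>
definition torsion_form ::
  "('s \<Rightarrow> 's \<Rightarrow> 's::real_vector) \<Rightarrow> ('s \<Rightarrow> 's \<Rightarrow> 's) \<Rightarrow> ('s \<Rightarrow> 's \<Rightarrow> 'f::comm_ring_1) \<Rightarrow> 's \<Rightarrow> 's \<Rightarrow> 's \<Rightarrow> 'f" where
  "torsion_form D br ip u v w = ip (D u v - D v u - br u v) w + ip v (D w u)"

definition D_one :: "('s \<Rightarrow> 's \<Rightarrow> 's::real_vector) \<Rightarrow> ('s \<Rightarrow> 's) \<Rightarrow> 's \<Rightarrow> 's \<Rightarrow> 's" where
  "D_one D J2 u v = D u v - (1/2) *\<^sub>R J2 (cov_deriv_endo D J2 u v)"

definition pi_tilde ::
  "('s \<Rightarrow> 's) \<Rightarrow> ('s \<Rightarrow> 's) \<Rightarrow> ('s \<Rightarrow> 's) \<Rightarrow> ('s \<Rightarrow> 's \<Rightarrow> 's \<Rightarrow> 'f::plus) \<Rightarrow> 's \<Rightarrow> 's \<Rightarrow> 's \<Rightarrow> 'f" where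
  "pi_tilde J1 J2 J3 \<alpha> u v w =
     \<alpha> u v w + \<alpha> u (J1 v) (J1 w) + \<alpha> u (J2 v) (J2 w) + \<alpha> u (J3 v) (J3 w)"

definition conn_plus ::
  "('s \<Rightarrow> 's \<Rightarrow> 'f::real_vector) \<Rightarrow> ('s \<Rightarrow> 's \<Rightarrow> 's) \<Rightarrow> ('s \<Rightarrow> 's \<Rightarrow> 's \<Rightarrow> 'f) \<Rightarrow> 's \<Rightarrow> 's \<Rightarrow> 's" where
  "conn_plus ip D \<eta> u v = (THE x. \<forall>w. ip x w = ip (D u v) w + \<eta> u v w)"

definition D_tilde ::
  "('s \<Rightarrow> 's \<Rightarrow> 'f::{comm_ring_1,real_algebra_1}) \<Rightarrow> ('s \<Rightarrow> 's \<Rightarrow> 's::real_vector) \<Rightarrow> ('s \<Rightarrow> 's \<Rightarrow> 's) \<Rightarrow>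
   ('s \<Rightarrow> 's) \<Rightarrow> ('s \<Rightarrow> 's) \<Rightarrow> ('s \<Rightarrow> 's) \<Rightarrow> 's \<Rightarrow> 's \<Rightarrow> 's" where
  "D_tilde ip br D J1 J2 J3 =
     conn_plus ip (D_one D J2)
       (\<lambda>u v w. - ((1/6) *\<^sub>R pi_tilde J1 J2 J3 (torsion_form (D_one D J2) br ip) u v w))"

end

theory Submission
  imports Defs
begin

text \<open>Averaging D with its J2-conjugate gives a connection D^(1) preserving J2; as J1
  anticommutes with J2, the conjugate of a J1-parallel connection is again J1-parallel, so D^(1)
  preserves J1 and J3 = J1 J2.  Adding to a connection a tensor eta in E^* (x) Lambda^2 E^* changes
  its torsion by the alternation eta(u,v,w) - eta(v,u,w) + eta(w,u,v), and keeps J parallel when eta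
  is J-invariant in its last two slots, which pi~ ensures.  For a connection preserving J one has
  N_J(u,v,w) = T(u,v,w) - T(Ju,Jv,w) - T(Ju,v,Jw) - T(u,Jv,Jw), and the correction
  -1/6 pi~(T) turns T into the average of these three expressions.\<close>

definition skew_tensor ::
  "('f::{comm_ring_1,real_algebra_1} \<Rightarrow> 's::real_vector \<Rightarrow> 's) \<Rightarrow> ('s \<Rightarrow> 's \<Rightarrow> 's \<Rightarrow> 'f) \<Rightarrow> bool" where
  "skew_tensor sm \<eta> \<longleftrightarrow>
     (\<forall>v w. bundle_functional sm (\<lambda>u. \<eta> u v w)) \<and> (\<forall>u v. bundle_functional sm (\<eta> u v)) \<and>
     (\<forall>u v w. \<eta> u v w = - \<eta> u w v)"

lemma preserves_iff: "preserves D J \<longleftrightarrow> (\<forall>u v. D u (J v) = J (D u v))"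
  by (simp add: preserves_def cov_deriv_endo_def)

lemma preserves_comp: "preserves D J \<Longrightarrow> preserves D K \<Longrightarrow> preserves D (\<lambda>u. J (K u))"
  by (simp add: preserves_iff)

lemma bundle_functional_add: "bundle_functional sm \<alpha> \<Longrightarrow> \<alpha> (u + v) = \<alpha> u + \<alpha> v"
  and bundle_functional_sm: "bundle_functional sm \<alpha> \<Longrightarrow> \<alpha> (sm f u) = f * \<alpha> u"
  by (simp_all add: bundle_functional_def)

lemma bundle_functional_plus:
  "bundle_functional sm \<alpha> \<Longrightarrow> bundle_functional sm \<beta> \<Longrightarrow> bundle_functional sm (\<lambda>w. \<alpha> w + \<beta> w)"
  by (simp add: bundle_functional_def algebra_simps)

lemma bundle_functional_scaleR:
  "bundle_functional sm \<alpha> \<Longrightarrow> bundle_functional sm (\<lambda>w. c *\<^sub>R \<alpha> w)"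
  by (simp add: bundle_functional_def scaleR_right_distrib)

lemma bundle_functional_comp:
  "bundle_functional sm \<alpha> \<Longrightarrow> bundle_endo sm J \<Longrightarrow> bundle_functional sm (\<lambda>w. \<alpha> (J w))"
  by (simp add: bundle_functional_def bundle_endo_def)

locale metric_bundle =
  fixes sm :: "'f::{comm_ring_1,real_algebra_1} \<Rightarrow> 's::real_vector \<Rightarrow> 's"
    and ip :: "'s \<Rightarrow> 's \<Rightarrow> 'f"
  assumes module_action: "module_action sm"
    and metric: "is_metric sm ip"
begin

lemma sm_mult: "sm (f * g) u = sm f (sm g u)"
  and sm_of_real: "sm (of_real c) u = c *\<^sub>R u"
  using module_action by (simp_all add: module_action_def)

lemma sm_linear: "linear (sm f)"
  unfolding linear_iff using module_action
  by (simp add: module_action_def) (metis sm_mult sm_of_real mult.commute)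

lemma ip_sym: "ip u v = ip v u"
  and ip_add_left: "ip (u + v) w = ip u w + ip v w"
  and ip_sm_left: "ip (sm f u) w = f * ip u w"
  and ip_nondegenerate: "(\<And>w. ip v w = 0) \<Longrightarrow> v = 0"
  and ip_represents: "bundle_functional sm \<alpha> \<Longrightarrow> \<exists>x. \<forall>w. ip x w = \<alpha> w"
  using metric unfolding is_metric_def by blast+

lemma bundle_functional_linear:
  assumes "bundle_functional sm \<alpha>"
  shows "\<alpha> (c *\<^sub>R u) = c *\<^sub>R \<alpha> u" and "\<alpha> (- u) = - \<alpha> u" and "\<alpha> (u - v) = \<alpha> u - \<alpha> v"
proof -
  show scale: "\<alpha> (c *\<^sub>R u) = c *\<^sub>R \<alpha> u" for c u
    using bundle_functional_sm[OF assms, of "of_real c" u] by (simp add: sm_of_real scaleR_conv_of_real)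
  show neg: "\<alpha> (- u) = - \<alpha> u" for u using scale[of "-1" u] by simp
  show "\<alpha> (u - v) = \<alpha> u - \<alpha> v"
    using bundle_functional_add[OF assms, of u "- v"] neg[of v] by simp
qed

lemma bundle_functional_ip: "bundle_functional sm (ip x)"
  unfolding bundle_functional_def by (metis ip_add_left ip_sm_left ip_sym)

lemma ip_add_right: "ip w (u + v) = ip w u + ip w v"
  and ip_sm_right: "ip w (sm f u) = f * ip w u"
  using bundle_functional_ip by (simp_all add: bundle_functional_def)

lemmas ip_linear_right = bundle_functional_linear[OF bundle_functional_ip]

lemma ip_linear_left:
  "ip (c *\<^sub>R u) w = c *\<^sub>R ip u w" "ip (- u) w = - ip u w" "ip (u - v) w = ip u w - ip v w"
  by (simp_all only: ip_sym[of _ w] ip_linear_right)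

lemmas ip_simps = ip_add_left ip_add_right ip_sm_left ip_sm_right ip_linear_left ip_linear_right

lemma ip_ext: "(\<And>w. ip x w = ip y w) \<Longrightarrow> x = y"
  using ip_nondegenerate[of "x - y"] by (simp add: ip_linear_left)

lemma bundle_endo_linear: "bundle_endo sm J \<Longrightarrow> linear J"
  unfolding bundle_endo_def linear_iff by (metis sm_of_real)

context
  fixes J assumes J: "gen_almost_complex sm ip J"
begin

lemma almost_complex_linear: "linear J"
  using J by (simp add: gen_almost_complex_def bundle_endo_linear)

lemma almost_complex_sm: "J (sm f u) = sm f (J u)"
  and almost_complex_square: "J (J u) = - u"
  and almost_complex_orthogonal: "ip (J u) (J v) = ip u v"
  using J by (simp_all add: gen_almost_complex_def bundle_endo_def)

lemma almost_complex_skew: "ip (J u) v = - ip u (J v)"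
  using almost_complex_orthogonal[of u "J v"]
  by (simp add: almost_complex_square ip_linear_right minus_equation_iff)

end

context
  fixes anc D assumes D: "gen_connection sm anc ip D"
begin

lemma connection_linear: "linear (D u)"
  and connection_add_left: "D (u + u') v = D u v + D u' v"
  and connection_sm_left: "D (sm f u) v = sm f (D u v)"
  and connection_leibniz: "D u (sm f v) = sm (anc u f) v + sm f (D u v)"
  and connection_metric: "anc u (ip v w) = ip (D u v) w + ip v (D u w)"
  using D by (simp_all add: gen_connection_def)

end

lemma connection_conjugate:
  assumes D: "gen_connection sm anc ip D" and J: "gen_almost_complex sm ip J"
  shows "gen_connection sm anc ip (\<lambda>u v. - J (D u (J v)))"
  unfolding gen_connection_def
proof (intro conjI allI)
  note J_lin = almost_complex_linear[OF J]
  show "linear (\<lambda>v. - J (D u (J v)))" for u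
    by (simp add: linear_iff linear_add[OF J_lin] linear_scale[OF J_lin]
        linear_add[OF connection_linear[OF D]] linear_scale[OF connection_linear[OF D]])
  show "- J (D (u + u') (J v)) = - J (D u (J v)) + - J (D u' (J v))" for u u' v
    by (simp add: connection_add_left[OF D] linear_add[OF J_lin])
  show "- J (D (sm f u) (J v)) = sm f (- J (D u (J v)))" for f u v
    by (simp add: connection_sm_left[OF D] almost_complex_sm[OF J] linear_neg[OF sm_linear])
  show "- J (D u (J (sm f v))) = sm (anc u f) v + sm f (- J (D u (J v)))" for u f v
    by (simp add: almost_complex_sm[OF J] connection_leibniz[OF D] linear_add[OF J_lin]
        almost_complex_square[OF J] linear_neg[OF sm_linear])
  show "anc u (ip v w) = ip (- J (D u (J v))) w + ip v (- J (D u (J w)))" for u v w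
    using connection_metric[OF D, of u "J v" "J w"] unfolding almost_complex_orthogonal[OF J]
    by (simp add: ip_linear_left ip_linear_right almost_complex_skew[OF J] ip_sym[of v])
qed

lemma connection_midpoint:
  assumes D: "gen_connection sm anc ip D" and D': "gen_connection sm anc ip D'"
  shows "gen_connection sm anc ip (\<lambda>u v. (1/2) *\<^sub>R (D u v + D' u v))"
  unfolding gen_connection_def
proof (intro conjI allI)
  show "linear (\<lambda>v. (1/2) *\<^sub>R (D u v + D' u v))" for u
    by (simp add: linear_iff linear_add[OF connection_linear[OF D]] linear_scale[OF connection_linear[OF D]]
        linear_add[OF connection_linear[OF D']] linear_scale[OF connection_linear[OF D']] algebra_simps)
  show "(1/2) *\<^sub>R (D (u + u') v + D' (u + u') v)
      = (1/2) *\<^sub>R (D u v + D' u v) + (1/2) *\<^sub>R (D u' v + D' u' v)" for u u' v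
    by (simp add: connection_add_left[OF D] connection_add_left[OF D'] algebra_simps)
  show "(1/2) *\<^sub>R (D (sm f u) v + D' (sm f u) v) = sm f ((1/2) *\<^sub>R (D u v + D' u v))" for f u v
    by (simp add: connection_sm_left[OF D] connection_sm_left[OF D'] linear_add[OF sm_linear] linear_scale[OF sm_linear])
  show "(1/2) *\<^sub>R (D u (sm f v) + D' u (sm f v))
      = sm (anc u f) v + sm f ((1/2) *\<^sub>R (D u v + D' u v))" for u f v
  proof -
    have "(1/2) *\<^sub>R (D u (sm f v) + D' u (sm f v))
        = (1/2) *\<^sub>R (sm (anc u f) v + sm (anc u f) v) + sm f ((1/2) *\<^sub>R (D u v + D' u v))"
      by (simp add: connection_leibniz[OF D] connection_leibniz[OF D'] linear_add[OF sm_linear]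
          linear_scale[OF sm_linear] algebra_simps)
    then show ?thesis by (simp only: scaleR_half_double)
  qed
  show "anc u (ip v w) = ip ((1/2) *\<^sub>R (D u v + D' u v)) w + ip v ((1/2) *\<^sub>R (D u w + D' u w))" for u v w
  proof -
    have "ip ((1/2) *\<^sub>R (D u v + D' u v)) w + ip v ((1/2) *\<^sub>R (D u w + D' u w))
        = (1/2) *\<^sub>R ((ip (D u v) w + ip v (D u w)) + (ip (D' u v) w + ip v (D' u w)))"
      by (simp add: ip_simps algebra_simps)
    then show ?thesis by (simp only: connection_metric[OF D, symmetric] connection_metric[OF D', symmetric] scaleR_half_double)
  qed
qed

lemma D_one_midpoint:
  assumes J: "gen_almost_complex sm ip J"
  shows "D_one D J = (\<lambda>u v. (1/2) *\<^sub>R (D u v + - J (D u (J v))))"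
proof (intro ext)
  fix u v
  have "D_one D J u v = D u v - (1/2) *\<^sub>R (J (D u (J v)) + D u v)"
    by (simp add: D_one_def cov_deriv_endo_def linear_diff[OF almost_complex_linear[OF J]]
        almost_complex_square[OF J])
  also have "\<dots> = (1/2) *\<^sub>R (D u v + - J (D u (J v)))"
  proof -
    have "D u v - (1/2) *\<^sub>R D u v = (1 - 1/2) *\<^sub>R D u v" by (simp only: scaleR_diff_left scaleR_one)
    then show ?thesis by (simp add: algebra_simps)
  qed
  finally show "D_one D J u v = (1/2) *\<^sub>R (D u v + - J (D u (J v)))" .
qed

lemma connection_D_one:
  assumes D: "gen_connection sm anc ip D" and J: "gen_almost_complex sm ip J"
  shows "gen_connection sm anc ip (D_one D J)"
  unfolding D_one_midpoint[OF J] by (rule connection_midpoint[OF D connection_conjugate[OF D J]])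

lemma preserves_D_one:
  assumes D: "gen_connection sm anc ip D" and J: "gen_almost_complex sm ip J"
  shows "preserves (D_one D J) J"
  unfolding preserves_iff
proof (intro allI)
  fix u v
  note J_lin = almost_complex_linear[OF J]
  have "D_one D J u (J v) = (1/2) *\<^sub>R (D u (J v) + J (D u v))"
    by (simp add: D_one_midpoint[OF J] almost_complex_square[OF J] linear_neg[OF connection_linear[OF D]]
        linear_neg[OF J_lin])
  also have "\<dots> = J (D_one D J u v)"
    by (simp add: D_one_midpoint[OF J] almost_complex_square[OF J] linear_scale[OF J_lin]
        linear_diff[OF J_lin] add.commute)
  finally show "D_one D J u (J v) = J (D_one D J u v)" .
qed

lemma preserves_D_one_anticommuting:
  assumes D: "gen_connection sm anc ip D" and J: "gen_almost_complex sm ip J"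
    and K: "linear K" and anti: "\<And>u. K (J u) = - J (K u)" and DK: "preserves D K"
  shows "preserves (D_one D J) K"
  unfolding preserves_iff
proof (intro allI)
  fix u v
  have anti': "J (K x) = - K (J x)" for x
    using anti[of x] by (simp add: minus_equation_iff)
  have DK': "D u (K x) = K (D u x)" for x
    using DK by (simp add: preserves_iff)
  show "D_one D J u (K v) = K (D_one D J u v)"
    by (simp add: D_one_midpoint[OF J] anti' DK' linear_neg[OF connection_linear[OF D]]
        linear_neg[OF almost_complex_linear[OF J]] linear_scale[OF K] linear_diff[OF K])
qed

lemma skew_tensor_first: "skew_tensor sm \<eta> \<Longrightarrow> bundle_functional sm (\<lambda>u. \<eta> u v w)"
  and skew_tensor_last: "skew_tensor sm \<eta> \<Longrightarrow> bundle_functional sm (\<eta> u v)"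
  and skew_tensor_skew: "skew_tensor sm \<eta> \<Longrightarrow> \<eta> u v w = - \<eta> u w v"
  unfolding skew_tensor_def by blast+

lemma skew_tensor_middle:
  assumes \<eta>: "skew_tensor sm \<eta>"
  shows "bundle_functional sm (\<lambda>v. \<eta> u v w)"
  using bundle_functional_add[OF skew_tensor_last[OF \<eta>]] bundle_functional_sm[OF skew_tensor_last[OF \<eta>]]
  by (simp add: bundle_functional_def skew_tensor_skew[OF \<eta>, of u _ w])

lemma skew_tensor_scaleR:
  assumes \<beta>: "skew_tensor sm \<beta>"
  shows "skew_tensor sm (\<lambda>u v w. c *\<^sub>R \<beta> u v w)"
proof -
  have "c *\<^sub>R \<beta> u v w = - (c *\<^sub>R \<beta> u w v)" for u v w
    by (subst skew_tensor_skew[OF \<beta>]) simp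
  then show ?thesis
    unfolding skew_tensor_def
    using bundle_functional_scaleR[OF skew_tensor_first[OF \<beta>]]
      bundle_functional_scaleR[OF skew_tensor_last[OF \<beta>]] by blast
qed

lemma conn_plus_inner:
  assumes "bundle_functional sm (\<eta> u v)"
  shows "ip (conn_plus ip D \<eta> u v) w = ip (D u v) w + \<eta> u v w"
proof -
  obtain x where x: "\<And>w. ip x w = ip (D u v) w + \<eta> u v w"
    using ip_represents[OF bundle_functional_plus[OF bundle_functional_ip assms]] by blast
  have "conn_plus ip D \<eta> u v = x"
    unfolding conn_plus_def by (rule the_equality) (simp_all add: x ip_ext)
  with x show ?thesis by simp
qed

lemma connection_conn_plus:
  assumes D: "gen_connection sm anc ip D" and \<eta>: "skew_tensor sm \<eta>"
  shows "gen_connection sm anc ip (conn_plus ip D \<eta>)"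
  unfolding gen_connection_def
proof (intro conjI allI)
  note inner = conn_plus_inner[OF skew_tensor_last[OF \<eta>]]
  note first = skew_tensor_first[OF \<eta>] and middle = skew_tensor_middle[OF \<eta>]
  show "linear (conn_plus ip D \<eta> u)" for u
    unfolding linear_iff
    by (auto intro!: ip_ext simp: inner ip_simps linear_add[OF connection_linear[OF D]]
        linear_scale[OF connection_linear[OF D]] bundle_functional_add[OF middle]
        bundle_functional_linear(1)[OF middle] scaleR_add_right)
  show "conn_plus ip D \<eta> (u + u') v = conn_plus ip D \<eta> u v + conn_plus ip D \<eta> u' v" for u u' v
    by (rule ip_ext) (simp add: inner ip_simps connection_add_left[OF D] bundle_functional_add[OF first])
  show "conn_plus ip D \<eta> (sm f u) v = sm f (conn_plus ip D \<eta> u v)" for f u v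
    by (rule ip_ext) (simp add: inner ip_simps connection_sm_left[OF D] bundle_functional_sm[OF first] algebra_simps)
  show "conn_plus ip D \<eta> u (sm f v) = sm (anc u f) v + sm f (conn_plus ip D \<eta> u v)" for u f v
    by (rule ip_ext) (simp add: inner ip_simps connection_leibniz[OF D] bundle_functional_sm[OF middle] algebra_simps)
  show "anc u (ip v w) = ip (conn_plus ip D \<eta> u v) w + ip v (conn_plus ip D \<eta> u w)" for u v w
    using connection_metric[OF D, of u v w] skew_tensor_skew[OF \<eta>, of u w v]
    by (simp add: inner ip_sym[of v])
qed

lemma preserves_conn_plus:
  assumes DJ: "preserves D J" and J: "gen_almost_complex sm ip J" and \<eta>: "skew_tensor sm \<eta>"
    and invariant: "\<And>u v w. \<eta> u (J v) (J w) = \<eta> u v w"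
  shows "preserves (conn_plus ip D \<eta>) J"
  unfolding preserves_iff
proof (intro allI)
  fix u v
  have "\<eta> u (J v) w = - \<eta> u v (J w)" for w
    using invariant[of u "J v" w] bundle_functional_linear(2)[OF skew_tensor_middle[OF \<eta>]]
    by (simp add: almost_complex_square[OF J])
  with DJ show "conn_plus ip D \<eta> u (J v) = J (conn_plus ip D \<eta> u v)"
    by (intro ip_ext) (simp add: conn_plus_inner[OF skew_tensor_last[OF \<eta>]] preserves_iff
        almost_complex_skew[OF J])
qed

lemma torsion_form_conn_plus:
  assumes \<eta>: "skew_tensor sm \<eta>"
  shows "torsion_form (conn_plus ip D \<eta>) br ip u v w
       = torsion_form D br ip u v w + \<eta> u v w - \<eta> v u w + \<eta> w u v"
  by (simp add: torsion_form_def ip_simps ip_sym[of v] conn_plus_inner[OF skew_tensor_last[OF \<eta>]])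

lemma torsion_form_functional:
  assumes D: "gen_connection sm anc ip D"
  shows "bundle_functional sm (torsion_form D br ip u v)"
  unfolding bundle_functional_def torsion_form_def
  by (simp add: ip_simps connection_add_left[OF D] connection_sm_left[OF D] algebra_simps)

lemma nijenhuis_form_eq_torsion:
  assumes "preserves D J" and J: "gen_almost_complex sm ip J"
  shows "nijenhuis_form br ip J u v w
       = torsion_form D br ip u v w - torsion_form D br ip (J u) (J v) w
         - torsion_form D br ip (J u) v (J w) - torsion_form D br ip u (J v) (J w)"
  using assms
  by (simp add: nijenhuis_form_def torsion_form_def preserves_iff ip_simps almost_complex_skew[OF J]
      almost_complex_square[OF J] linear_add[OF almost_complex_linear[OF J]]
      linear_diff[OF almost_complex_linear[OF J]])

end

lemma pi_tilde_correction_alternation: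
  fixes \<alpha> \<eta> :: "'s \<Rightarrow> 's \<Rightarrow> 's \<Rightarrow> 'f::real_vector"
  assumes swap_first: "\<And>u v w. \<alpha> u v w = - \<alpha> v u w"
    and swap_last: "\<And>u v w. \<alpha> u v w = - \<alpha> u w v"
    and \<eta>: "\<And>u v w. \<eta> u v w = - ((1/6) *\<^sub>R pi_tilde J1 J2 J3 \<alpha> u v w)"
  shows "\<alpha> u v w + \<eta> u v w - \<eta> v u w + \<eta> w u v
    = (1/6) *\<^sub>R ((\<alpha> u v w - \<alpha> (J1 u) (J1 v) w - \<alpha> (J1 u) v (J1 w) - \<alpha> u (J1 v) (J1 w))
               + (\<alpha> u v w - \<alpha> (J2 u) (J2 v) w - \<alpha> (J2 u) v (J2 w) - \<alpha> u (J2 v) (J2 w))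
               + (\<alpha> u v w - \<alpha> (J3 u) (J3 v) w - \<alpha> (J3 u) v (J3 w) - \<alpha> u (J3 v) (J3 w)))"
proof -
  have cyclic: "\<alpha> w a b = \<alpha> a b w" for w a b
    using swap_first[of w a b] swap_last[of a w b] by simp
  have "\<eta> v u w = (1/6) *\<^sub>R (\<alpha> u v w + \<alpha> (J1 u) v (J1 w) + \<alpha> (J2 u) v (J2 w) + \<alpha> (J3 u) v (J3 w))"
    unfolding \<eta> pi_tilde_def
    by (simp add: swap_first[of v] algebra_simps)
  moreover have "\<eta> w u v = - ((1/6) *\<^sub>R (\<alpha> u v w + \<alpha> (J1 u) (J1 v) w + \<alpha> (J2 u) (J2 v) w + \<alpha> (J3 u) (J3 v) w))"
    unfolding \<eta> pi_tilde_def by (simp only: cyclic[of w])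
  ultimately show ?thesis
    unfolding \<eta>[of u v w] pi_tilde_def
    by (simp add: algebra_simps) (simp add: scaleR_left_distrib[symmetric])
qed

locale almost_hypercomplex = metric_bundle +
  fixes J1 J2 J3
  assumes hypercomplex: "gen_almost_hypercomplex sm ip J1 J2 J3"
begin

lemma almost_complex_J1: "gen_almost_complex sm ip J1"
  and almost_complex_J2: "gen_almost_complex sm ip J2"
  and almost_complex_J3: "gen_almost_complex sm ip J3"
  and J1_J2_anticommute: "J1 (J2 u) = - J2 (J1 u)"
  and J3_eq: "J3 u = J1 (J2 u)"
  using hypercomplex unfolding gen_almost_hypercomplex_def by blast+

lemmas J_linear = almost_complex_linear[OF almost_complex_J1] almost_complex_linear[OF almost_complex_J2]
  and J_square = almost_complex_square[OF almost_complex_J1] almost_complex_square[OF almost_complex_J2]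

lemma quaternion_relations:
  "J2 (J1 u) = - J3 u" "J1 (J3 u) = - J2 u" "J3 (J1 u) = J2 u"
  "J2 (J3 u) = J1 u" "J3 (J2 u) = - J1 u" "J3 (J3 u) = - u"
  by (simp_all add: J3_eq J1_J2_anticommute J_square linear_neg[OF J_linear(1)] linear_neg[OF J_linear(2)])

lemma skew_tensor_pi_tilde:
  assumes \<alpha>: "skew_tensor sm \<alpha>"
  shows "skew_tensor sm (pi_tilde J1 J2 J3 \<alpha>)"
proof -
  have endo: "bundle_endo sm J1" "bundle_endo sm J2" "bundle_endo sm J3"
    using almost_complex_J1 almost_complex_J2 almost_complex_J3 by (simp_all add: gen_almost_complex_def)
  note first = skew_tensor_first[OF \<alpha>] and last = skew_tensor_last[OF \<alpha>]
  have "pi_tilde J1 J2 J3 \<alpha> u v w = - pi_tilde J1 J2 J3 \<alpha> u w v" for u v w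
    unfolding pi_tilde_def
    by (subst (1 2 3 4) skew_tensor_skew[OF \<alpha>]) simp
  moreover have "bundle_functional sm (\<lambda>u. pi_tilde J1 J2 J3 \<alpha> u v w)" for v w
    unfolding pi_tilde_def by (intro bundle_functional_plus first)
  moreover have "bundle_functional sm (pi_tilde J1 J2 J3 \<alpha> u v)" for u v
    unfolding pi_tilde_def by (intro bundle_functional_plus last bundle_functional_comp[OF last] endo)
  ultimately show ?thesis
    unfolding skew_tensor_def by blast
qed

lemma pi_tilde_invariant:
  assumes \<alpha>: "skew_tensor sm \<alpha>"
  shows "pi_tilde J1 J2 J3 \<alpha> u (J1 v) (J1 w) = pi_tilde J1 J2 J3 \<alpha> u v w"
    and "pi_tilde J1 J2 J3 \<alpha> u (J2 v) (J2 w) = pi_tilde J1 J2 J3 \<alpha> u v w"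
    and "pi_tilde J1 J2 J3 \<alpha> u (J3 v) (J3 w) = pi_tilde J1 J2 J3 \<alpha> u v w"
proof -
  have even: "\<alpha> u (- v) (- w) = \<alpha> u v w" for u v w
    using bundle_functional_linear(2)[OF skew_tensor_middle[OF \<alpha>]]
      bundle_functional_linear(2)[OF skew_tensor_last[OF \<alpha>]] by simp
  show "pi_tilde J1 J2 J3 \<alpha> u (J1 v) (J1 w) = pi_tilde J1 J2 J3 \<alpha> u v w"
    "pi_tilde J1 J2 J3 \<alpha> u (J2 v) (J2 w) = pi_tilde J1 J2 J3 \<alpha> u v w"
    "pi_tilde J1 J2 J3 \<alpha> u (J3 v) (J3 w) = pi_tilde J1 J2 J3 \<alpha> u v w"
    by (simp_all add: pi_tilde_def quaternion_relations J_square J1_J2_anticommute even algebra_simps)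
qed

end

locale courant =
  fixes sm :: "'f::{comm_ring_1,real_algebra_1} \<Rightarrow> 's::real_vector \<Rightarrow> 's"
    and anc :: "'s \<Rightarrow> 'f \<Rightarrow> 'f"
    and ip :: "'s \<Rightarrow> 's \<Rightarrow> 'f"
    and br :: "'s \<Rightarrow> 's \<Rightarrow> 's"
  assumes courant: "courant_algebroid sm anc ip br"

sublocale courant \<subseteq> metric_bundle sm ip
  using courant unfolding courant_algebroid_def by unfold_locales blast+

context courant
begin

lemma anchor_add: "anc u (f + g) = anc u f + anc u g"
  using courant unfolding courant_algebroid_def is_anchor_def by meson

lemma bracket_linear_right: "linear (br u)"
  and bracket_linear_left: "linear (\<lambda>u. br u v)"
  and bracket_metric: "anc u (ip v w) = ip (br u v) w + ip v (br u w)"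
  and bracket_self: "2 * ip (br u u) w = anc w (ip u u)"
  using courant unfolding courant_algebroid_def by meson+

lemma bracket_add_left: "br (u + u') v = br u v + br u' v"
  and bracket_add_right: "br u (v + v') = br u v + br u v'"
  using linear_add[OF bracket_linear_left, of u u' v] linear_add[OF bracket_linear_right] by simp_all

lemma bracket_symmetric_part: "ip (br u v) w + ip (br v u) w = anc w (ip u v)"
proof -
  let ?a = "ip (br u u) w" and ?b = "ip (br v v) w" and ?s = "ip (br u v) w + ip (br v u) w"
  have "2 * (?a + ?s + ?b) = 2 * ip (br (u + v) (u + v)) w"
    by (simp add: bracket_add_left bracket_add_right ip_add_left add.assoc)
  also have "\<dots> = anc w (ip u u) + (anc w (ip u v) + anc w (ip u v)) + anc w (ip v v)"
    by (simp only: bracket_self ip_add_left ip_add_right ip_sym[of v u] anchor_add add.assoc)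
  finally have "anc w (ip u u) + 2 * ?s + anc w (ip v v)
      = anc w (ip u u) + 2 * anc w (ip u v) + anc w (ip v v)"
    by (simp only: distrib_left bracket_self mult_2[of "anc w (ip u v)"])
  then have "2 * ?s = 2 * anc w (ip u v)"
    by simp
  then have "(2::real) *\<^sub>R ?s = 2 *\<^sub>R anc w (ip u v)"
    by (simp add: scaleR_conv_of_real)
  then show ?thesis by simp
qed

lemma torsion_form_swap_last:
  assumes D: "gen_connection sm anc ip D"
  shows "torsion_form D br ip u v w = - torsion_form D br ip u w v"
proof -
  have "torsion_form D br ip u v w + torsion_form D br ip u w v
      = (ip (D u v) w + ip v (D u w)) - (ip (br u v) w + ip v (br u w))"
    by (simp add: torsion_form_def ip_simps ip_sym[of v "D u w"] ip_sym[of v "br u w"]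
        ip_sym[of v "D w u"] ip_sym[of w "D v u"] algebra_simps)
  also have "\<dots> = 0"
    by (simp only: connection_metric[OF D, symmetric] bracket_metric[symmetric] diff_self)
  finally show ?thesis by (simp add: eq_neg_iff_add_eq_0)
qed

lemma torsion_form_swap_first:
  assumes D: "gen_connection sm anc ip D"
  shows "torsion_form D br ip u v w = - torsion_form D br ip v u w"
proof -
  have "torsion_form D br ip u v w + torsion_form D br ip v u w
      = (ip (D w u) v + ip u (D w v)) - (ip (br u v) w + ip (br v u) w)"
    by (simp add: torsion_form_def ip_simps ip_sym[of v "D w u"] algebra_simps)
  also have "\<dots> = 0"
    by (simp only: connection_metric[OF D, symmetric] bracket_symmetric_part diff_self)
  finally show ?thesis by (simp add: eq_neg_iff_add_eq_0)
qed

lemma torsion_form_skew_tensor: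
  assumes D: "gen_connection sm anc ip D"
  shows "skew_tensor sm (torsion_form D br ip)"
proof -
  have cyclic: "(\<lambda>u. torsion_form D br ip u v w) = torsion_form D br ip v w" for v w
  proof
    show "torsion_form D br ip u v w = torsion_form D br ip v w u" for u
      using torsion_form_swap_first[OF D, of u v w] torsion_form_swap_last[OF D, of v u w] by simp
  qed
  show ?thesis
    unfolding skew_tensor_def cyclic
    using torsion_form_functional[OF D] torsion_form_swap_last[OF D] by blast
qed

end

locale hypercomplex_connection = courant sm anc ip br + almost_hypercomplex sm ip J1 J2 J3
  for sm anc ip br J1 J2 J3 +
  fixes D
  assumes connection: "gen_connection sm anc ip D"
    and preserves_J1: "preserves D J1"
begin

abbreviation torsion_correction where
  "torsion_correction \<equiv> \<lambda>u v w. - ((1/6) *\<^sub>R pi_tilde J1 J2 J3 (torsion_form (D_one D J2) br ip) u v w)"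

lemma D_one_connection: "gen_connection sm anc ip (D_one D J2)"
  by (rule connection_D_one[OF connection almost_complex_J2])

lemma D_one_preserves:
  "preserves (D_one D J2) J1" "preserves (D_one D J2) J2" "preserves (D_one D J2) J3"
proof -
  show J1: "preserves (D_one D J2) J1"
    by (rule preserves_D_one_anticommuting[OF connection almost_complex_J2 J_linear(1) J1_J2_anticommute
          preserves_J1])
  show J2: "preserves (D_one D J2) J2"
    by (rule preserves_D_one[OF connection almost_complex_J2])
  show "preserves (D_one D J2) J3"
    using preserves_comp[OF J1 J2] by (simp add: J3_eq[abs_def])
qed

lemma skew_tensor_torsion_correction: "skew_tensor sm torsion_correction"
  using skew_tensor_scaleR[OF skew_tensor_pi_tilde[OF torsion_form_skew_tensor[OF D_one_connection]],
      of "- (1/6)"]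
  by simp

lemma D_tilde_connection: "gen_connection sm anc ip (D_tilde ip br D J1 J2 J3)"
  unfolding D_tilde_def by (rule connection_conn_plus[OF D_one_connection skew_tensor_torsion_correction])

lemma D_tilde_preserves:
  assumes "J \<in> {J1, J2, J3}"
  shows "preserves (D_tilde ip br D J1 J2 J3) J"
proof -
  have "preserves (D_one D J2) J" "gen_almost_complex sm ip J"
    using assms D_one_preserves almost_complex_J1 almost_complex_J2 almost_complex_J3 by auto
  moreover have "torsion_correction u (J v) (J w) = torsion_correction u v w" for u v w
    using assms pi_tilde_invariant[OF torsion_form_skew_tensor[OF D_one_connection]] by auto
  ultimately show ?thesis
    unfolding D_tilde_def by (rule preserves_conn_plus[OF _ _ skew_tensor_torsion_correction])
qed

lemma D_tilde_torsion:
  "torsion_form (D_tilde ip br D J1 J2 J3) br ip u v w =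
     (1/6) *\<^sub>R (nijenhuis_form br ip J1 u v w + nijenhuis_form br ip J2 u v w
                 + nijenhuis_form br ip J3 u v w)"
  unfolding D_tilde_def torsion_form_conn_plus[OF skew_tensor_torsion_correction]
  using pi_tilde_correction_alternation[where \<alpha> = "torsion_form (D_one D J2) br ip" and \<eta> = torsion_correction
      and ?J1.0 = J1 and ?J2.0 = J2 and ?J3.0 = J3,
      OF torsion_form_swap_first[OF D_one_connection] torsion_form_swap_last[OF D_one_connection]]
  by (simp only: nijenhuis_form_eq_torsion[OF D_one_preserves(1) almost_complex_J1]
      nijenhuis_form_eq_torsion[OF D_one_preserves(2) almost_complex_J2]
      nijenhuis_form_eq_torsion[OF D_one_preserves(3) almost_complex_J3])

end

theorem proposition4p4:
  fixes sm :: "'f::{comm_ring_1,real_algebra_1} \<Rightarrow> 's::real_vector \<Rightarrow> 's"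
    and anc :: "'s \<Rightarrow> 'f \<Rightarrow> 'f"
    and ip :: "'s \<Rightarrow> 's \<Rightarrow> 'f"
    and br :: "'s \<Rightarrow> 's \<Rightarrow> 's"
    and D :: "'s \<Rightarrow> 's \<Rightarrow> 's"
    and J1 J2 J3 :: "'s \<Rightarrow> 's"
  assumes "courant_algebroid sm anc ip br"
    and "gen_almost_hypercomplex sm ip J1 J2 J3"
    and "gen_connection sm anc ip D"
    and "preserves D J1"
  shows "gen_connection sm anc ip (D_one D J2) \<and>
         preserves (D_one D J2) J1 \<and> preserves (D_one D J2) J2 \<and> preserves (D_one D J2) J3 \<and>
         gen_connection sm anc ip (D_tilde ip br D J1 J2 J3) \<and>
         preserves (D_tilde ip br D J1 J2 J3) J1 \<and>
         preserves (D_tilde ip br D J1 J2 J3) J2 \<and>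
         preserves (D_tilde ip br D J1 J2 J3) J3 \<and>
         (\<forall>u v w. torsion_form (D_tilde ip br D J1 J2 J3) br ip u v w =
            (1/6) *\<^sub>R (nijenhuis_form br ip J1 u v w + nijenhuis_form br ip J2 u v w
                        + nijenhuis_form br ip J3 u v w)) \<and>
         (gen_hypercomplex sm ip br J1 J2 J3 \<longrightarrow>
            (\<forall>u v w. torsion_form (D_tilde ip br D J1 J2 J3) br ip u v w = 0))"
proof -
  interpret courant sm anc ip br by (rule courant.intro) fact
  interpret hypercomplex_connection sm anc ip br J1 J2 J3 D by unfold_locales (fact assms)+
  show ?thesis
    using D_one_connection D_one_preserves D_tilde_connection D_tilde_preserves D_tilde_torsion
    by (simp add: gen_hypercomplex_def)
qed
end
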